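(* For $n\ge1$ let \[ \mathbf{M}_n=\begin{bmatrix} \frac{n}{2(2n+1)} & \frac{-3}{2n(2n+1)} & \frac{3}{2n^{3}}\\ 0 & \frac{n}{2(2n+1)} & \frac{3}{2n}\\ 0 & 0 & 1 \end{bmatrix}. \] Then the limit $\lim_{N\to\infty}\mathbf{M}_1\mathbf{M}_2\cdots\mathbf{M}_N$ exists and equals \[ \begin{bmatrix}0 & 0 & \zeta(4)\\ 0 & 0 & \zeta(2)\\ 0&0&1\end{bmatrix}. \]
   Context: $\zeta$ denotes the Riemann zeta function. *)

theory Defs
  imports "HOL-Analysis.Analysis"
begin

definition riemann_zeta :: "real \<Rightarrow> real" where
  "riemann_zeta s = (\<Sum>n. 1 / (real (Suc n)) powr s)"

definition Mmat :: "nat \<Rightarrow> real^3^3" where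
  "Mmat n = (let m = real n in
     vector [vector [m / (2*(2*m+1)), -3 / (2*m*(2*m+1)), 3 / (2*m^3)],
             vector [0, m / (2*(2*m+1)), 3 / (2*m)],
             vector [0, 0, 1]])"

fun Mprod :: "nat \<Rightarrow> real^3^3" where
  "Mprod 0 = mat 1"
| "Mprod (Suc N) = Mprod N ** Mmat (Suc N)"

end

theory Submission
  imports Defs "HOL-Real_Asymp.Real_Asymp"
begin

text \<open>
  Put t_N(x) = (N! / (x (x+1) ... (x+N)))^2, A_N = \<Sum>_{k\<ge>1} t_N(k) and
  B_N = \<Sum>_{k\<ge>1} t_N(k) \<Sum>_{j\<le>N} (k+j)^-2, so that A_0 = \<zeta>(2) and B_0 = \<zeta>(4).
  Creative telescoping in k, with certificate (k + (3N+1)/2) t_N(k), yields the first-order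
  recurrences
    (2N+1) A_N - (N+1)/2 A_{N+1} = 3/(2(N+1)),
    (2N+1) B_N - (N+1)/2 B_{N+1} + 2/(N+1) A_{N+1} = 3/(2(N+1)) H_{N+1},
  where H_n = \<Sum>_{j<n} (j+1)^-2. By induction on N they show that M_1 ... M_N has diagonal
  entries d_N = \<Prod>_{m\<le>N} m/(2(2m+1)) \<le> 4^-N, entry -3 d_N H_N in position (1,2), and last
  column (\<zeta>(4) - (2N+1) d_N (B_N - 4 H_N A_N), \<zeta>(2) - (2N+1) d_N A_N, 1). Since A_N, B_N and
  H_N grow at most linearly, every term carrying d_N tends to 0.
\<close>

lemma pochhammer_mono:
  fixes a b :: "'a::linordered_semidom"
  assumes "0 < a" "a \<le> b"
  shows "pochhammer a n \<le> pochhammer b n"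
proof (induction n)
  case (Suc n)
  then show ?case
    unfolding pochhammer_Suc using assms by (intro mult_mono add_mono pochhammer_nonneg) auto
qed simp

lemma pochhammer_Suc_ge_fact:
  fixes x :: real
  assumes "1 \<le> x"
  shows "x * fact n \<le> pochhammer x (Suc n)"
  using pochhammer_mono[of 1 "x + 1" n] assms
  by (simp add: pochhammer_rec pochhammer_fact)

definition apery_term :: "nat \<Rightarrow> real \<Rightarrow> real" where
  "apery_term N x = (fact N / pochhammer x (Suc N))^2"

definition sq_recip_sum :: "nat \<Rightarrow> real \<Rightarrow> real" where
  "sq_recip_sum N x = (\<Sum>j\<le>N. 1 / (x + real j)^2)"

definition apery_telescoper :: "nat \<Rightarrow> real \<Rightarrow> real" where
  "apery_telescoper N x = apery_term N x * (x + (3 * real N + 1) / 2)"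

lemma apery_term_Suc:
  "apery_term (Suc N) x = apery_term N x * real (Suc N)^2 / (x + real (Suc N))^2"
  unfolding apery_term_def pochhammer_Suc[of x "Suc N"] fact_Suc
  by (simp add: power_divide power_mult_distrib)

lemma apery_term_shift:
  assumes "x \<noteq> 0"
  shows "apery_term N (x + 1) = apery_term N x * x^2 / (x + real (Suc N))^2"
proof -
  have "x * pochhammer (x + 1) (Suc N) = pochhammer x (Suc N) * (x + real (Suc N))"
    by (metis pochhammer_Suc pochhammer_rec)
  then have "pochhammer (x + 1) (Suc N) = pochhammer x (Suc N) * (x + real (Suc N)) / x"
    using assms by (simp add: eq_divide_eq ac_simps)
  then show ?thesis
    unfolding apery_term_def using assms by (simp add: power_divide power_mult_distrib)
qed

lemma sq_recip_sum_Suc: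
  "sq_recip_sum (Suc N) x = sq_recip_sum N x + 1 / (x + real (Suc N))^2"
  unfolding sq_recip_sum_def by simp

lemma sq_recip_sum_shift:
  "sq_recip_sum N (x + 1) = sq_recip_sum N x - 1 / x^2 + 1 / (x + real (Suc N))^2"
  by (induction N) (simp_all add: sq_recip_sum_Suc add_ac, simp add: sq_recip_sum_def)

lemma apery_creative_telescoping:
  assumes "x > 0"
  shows "(2 * real N + 1) * apery_term N x - real (Suc N) / 2 * apery_term (Suc N) x
       = apery_telescoper N x - apery_telescoper N (x + 1)"
  unfolding apery_telescoper_def apery_term_Suc apery_term_shift[OF less_imp_neq[OF assms, symmetric]]
  using assms by (simp add: field_simps) algebra

lemma apery_weighted_creative_telescoping:
  assumes "x > 0"
  shows "(2 * real N + 1) * apery_term N x * sq_recip_sum N x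
       - real (Suc N) / 2 * apery_term (Suc N) x * sq_recip_sum (Suc N) x
       + 2 / real (Suc N) * apery_term (Suc N) x
       = apery_telescoper N x * sq_recip_sum N x - apery_telescoper N (x + 1) * sq_recip_sum N (x + 1)"
proof -
  \<comment> \<open>Stated for a real \<open>n > 0\<close> in place of \<open>N + 1\<close>, so that \<open>field_simps\<close>
      can clear all denominators.\<close>
  have "(2 * (n - 1) + 1) * t * h - n / 2 * (t * n^2 / (x + n)^2) * (h + 1 / (x + n)^2)
          + 2 / n * (t * n^2 / (x + n)^2)
        = t * (x + (3 * (n - 1) + 1) / 2) * h
          - t * x^2 / (x + n)^2 * ((x + 1) + (3 * (n - 1) + 1) / 2) * (h - 1 / x^2 + 1 / (x + n)^2)"
    if "n > 0" for t h n :: real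
    using that assms by (simp add: field_simps) algebra
  from this[of "real (Suc N)"] show ?thesis
    unfolding apery_telescoper_def apery_term_Suc apery_term_shift[OF less_imp_neq[OF assms, symmetric]]
      sq_recip_sum_Suc sq_recip_sum_shift
    by (simp add: mult.assoc)
qed

lemma apery_term_nonneg: "0 \<le> apery_term N x"
  unfolding apery_term_def by simp

lemma apery_term_le:
  assumes "1 \<le> x"
  shows "apery_term N x \<le> 1 / x^2"
proof -
  have "0 < x * fact N" using assms by simp
  then have "fact N / pochhammer x (Suc N) \<le> fact N / (x * fact N)"
    using pochhammer_Suc_ge_fact[OF assms] assms
    by (intro divide_left_mono mult_pos_pos pochhammer_pos) auto
  also have "\<dots> = 1 / x" by simp
  finally have "(fact N / pochhammer x (Suc N))^2 \<le> (1 / x)^2"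
    using assms by (intro power_mono divide_nonneg_nonneg pochhammer_nonneg) auto
  then show ?thesis
    unfolding apery_term_def by (simp add: power_one_over)
qed

lemma apery_term_one: "apery_term N 1 = 1 / real (Suc N)^2"
  unfolding apery_term_def pochhammer_fact[symmetric] fact_Suc by (simp add: power_divide)

lemma apery_telescoper_one: "apery_telescoper N 1 = 3 / (2 * real (Suc N))"
proof -
  have "1 / n^2 * (1 + (3 * (n - 1) + 1) / 2) = 3 / (2 * n)" if "n > 0" for n :: real
    using that by (simp add: field_simps power2_eq_square)
  from this[of "real (Suc N)"] show ?thesis
    unfolding apery_telescoper_def apery_term_one by simp
qed

lemma sq_recip_sum_nonneg: "0 \<le> sq_recip_sum N x"
  unfolding sq_recip_sum_def by (intro sum_nonneg) simp

lemma sq_recip_sum_le: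
  assumes "1 \<le> x"
  shows "sq_recip_sum N x \<le> real (Suc N)"
proof -
  have "sq_recip_sum N x \<le> (\<Sum>j\<le>N. 1)"
    unfolding sq_recip_sum_def using assms by (intro sum_mono) (simp add: field_simps)
  then show ?thesis by simp
qed

lemma inverse_squares_sums_zeta_2: "(\<lambda>i. 1 / real (Suc i)^2) sums riemann_zeta 2"
proof -
  have "summable (\<lambda>i. inverse (real i ^ 2))"
    by (rule inverse_power_summable) simp
  then have "summable (\<lambda>i. 1 / real (Suc i)^2)"
    by (subst (asm) summable_Suc_iff[symmetric]) (simp add: divide_inverse)
  then show ?thesis
    unfolding riemann_zeta_def by (simp add: powr_realpow' summable_sums)
qed

definition apery_A :: "nat \<Rightarrow> real" where
  "apery_A N = (\<Sum>i. apery_term N (real (Suc i)))"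

definition apery_B :: "nat \<Rightarrow> real" where
  "apery_B N = (\<Sum>i. apery_term N (real (Suc i)) * sq_recip_sum N (real (Suc i)))"

lemma apery_weighted_term_le:
  assumes "1 \<le> x"
  shows "apery_term N x * sq_recip_sum N x \<le> real (Suc N) / x^2"
proof -
  have "apery_term N x * sq_recip_sum N x \<le> 1 / x^2 * real (Suc N)"
    using assms by (intro mult_mono apery_term_le sq_recip_sum_le sq_recip_sum_nonneg) auto
  then show ?thesis by simp
qed

lemma summable_apery_terms: "summable (\<lambda>i. apery_term N (real (Suc i)))"
  by (rule summable_comparison_test'[OF sums_summable[OF inverse_squares_sums_zeta_2], of 0])
     (simp add: apery_term_nonneg apery_term_le)

lemma summable_apery_weighted_terms:
  "summable (\<lambda>i. apery_term N (real (Suc i)) * sq_recip_sum N (real (Suc i)))"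
  by (rule summable_comparison_test'[OF summable_mult[OF sums_summable[OF inverse_squares_sums_zeta_2],
        of "real (Suc N)"], of 0])
     (use apery_weighted_term_le[of "real (Suc _)"] in \<open>simp add: apery_term_nonneg sq_recip_sum_nonneg\<close>)

lemma apery_A_0: "apery_A 0 = riemann_zeta 2"
  using inverse_squares_sums_zeta_2
  unfolding apery_A_def apery_term_def by (simp add: sums_iff power_one_over)

lemma apery_B_0: "apery_B 0 = riemann_zeta 4"
  unfolding apery_B_def apery_term_def sq_recip_sum_def riemann_zeta_def
  by (simp add: powr_realpow' power_one_over flip: power_add)

lemma apery_A_nonneg: "0 \<le> apery_A N"
  unfolding apery_A_def by (intro suminf_nonneg summable_apery_terms apery_term_nonneg)

lemma apery_B_nonneg: "0 \<le> apery_B N"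
  unfolding apery_B_def
  by (intro suminf_nonneg summable_apery_weighted_terms mult_nonneg_nonneg apery_term_nonneg sq_recip_sum_nonneg)

lemma apery_A_le: "apery_A N \<le> riemann_zeta 2"
  unfolding apery_A_def sums_unique[OF inverse_squares_sums_zeta_2]
  by (intro suminf_le summable_apery_terms sums_summable[OF inverse_squares_sums_zeta_2])
     (simp add: apery_term_le)

lemma apery_B_le: "apery_B N \<le> real (Suc N) * riemann_zeta 2"
  unfolding apery_B_def sums_unique[OF inverse_squares_sums_zeta_2]
    suminf_mult[OF sums_summable[OF inverse_squares_sums_zeta_2], symmetric]
  by (intro suminf_le summable_apery_weighted_terms summable_mult sums_summable[OF inverse_squares_sums_zeta_2])
     (use apery_weighted_term_le[of "real (Suc _)"] in simp)

lemma apery_telescoper_tendsto_zero: "(\<lambda>i. apery_telescoper N (real (Suc i))) \<longlonglongrightarrow> 0"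
proof (rule Lim_null_comparison)
  let ?c = "(3 * real N + 1) / 2"
  show "\<forall>\<^sub>F i in sequentially. norm (apery_telescoper N (real (Suc i))) \<le> (real (Suc i) + ?c) / real (Suc i)^2"
    unfolding apery_telescoper_def
    using apery_term_le[of "real (Suc _)" N]
    by (intro always_eventually allI)
       (simp add: abs_mult apery_term_nonneg mult_right_mono divide_simps)
  show "(\<lambda>i. (real (Suc i) + ?c) / real (Suc i)^2) \<longlonglongrightarrow> 0"
    by real_asymp
qed

lemma apery_weighted_telescoper_tendsto_zero:
  "(\<lambda>i. apery_telescoper N (real (Suc i)) * sq_recip_sum N (real (Suc i))) \<longlonglongrightarrow> 0"
proof (rule Lim_null_comparison)
  show "\<forall>\<^sub>F i in sequentially. norm (apery_telescoper N (real (Suc i)) * sq_recip_sum N (real (Suc i)))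
          \<le> real (Suc N) * norm (apery_telescoper N (real (Suc i)))"
    using sq_recip_sum_le[of "real (Suc _)" N]
    by (intro always_eventually allI)
       (simp add: abs_mult sq_recip_sum_nonneg mult_right_mono mult.commute)
  show "(\<lambda>i. real (Suc N) * norm (apery_telescoper N (real (Suc i)))) \<longlonglongrightarrow> 0"
    using tendsto_mult_right_zero[OF tendsto_norm_zero[OF apery_telescoper_tendsto_zero]] .
qed

lemma apery_A_recurrence:
  "(2 * real N + 1) * apery_A N - real (Suc N) / 2 * apery_A (Suc N) = 3 / (2 * real (Suc N))"
proof -
  let ?G = "\<lambda>i. apery_telescoper N (real (Suc i))"
  have "(\<lambda>i. (2 * real N + 1) * apery_term N (real (Suc i)) - real (Suc N) / 2 * apery_term (Suc N) (real (Suc i)))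
          sums ((2 * real N + 1) * apery_A N - real (Suc N) / 2 * apery_A (Suc N))"
    unfolding apery_A_def by (intro sums_diff sums_mult summable_sums summable_apery_terms)
  moreover have "(2 * real N + 1) * apery_term N (real (Suc i)) - real (Suc N) / 2 * apery_term (Suc N) (real (Suc i))
      = ?G i - ?G (Suc i)" for i
    using apery_creative_telescoping[of "real (Suc i)" N] by (simp add: add.commute)
  ultimately have "(2 * real N + 1) * apery_A N - real (Suc N) / 2 * apery_A (Suc N) = ?G 0 - 0"
    using telescope_sums'[OF apery_telescoper_tendsto_zero[of N]] by (simp add: sums_unique2)
  then show ?thesis
    by (simp add: apery_telescoper_one)
qed

lemma apery_B_recurrence:
  "(2 * real N + 1) * apery_B N - real (Suc N) / 2 * apery_B (Suc N) + 2 / real (Suc N) * apery_A (Suc N)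
     = 3 / (2 * real (Suc N)) * sq_recip_sum N 1"
proof -
  let ?G = "\<lambda>i. apery_telescoper N (real (Suc i)) * sq_recip_sum N (real (Suc i))"
  let ?w = "\<lambda>N i. apery_term N (real (Suc i)) * sq_recip_sum N (real (Suc i))"
  have "(\<lambda>i. (2 * real N + 1) * ?w N i - real (Suc N) / 2 * ?w (Suc N) i
            + 2 / real (Suc N) * apery_term (Suc N) (real (Suc i)))
          sums ((2 * real N + 1) * apery_B N - real (Suc N) / 2 * apery_B (Suc N) + 2 / real (Suc N) * apery_A (Suc N))"
    unfolding apery_A_def apery_B_def
    by (intro sums_add sums_diff sums_mult summable_sums summable_apery_terms summable_apery_weighted_terms)
  moreover have "(2 * real N + 1) * ?w N i - real (Suc N) / 2 * ?w (Suc N) i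
            + 2 / real (Suc N) * apery_term (Suc N) (real (Suc i)) = ?G i - ?G (Suc i)" for i
    using apery_weighted_creative_telescoping[of "real (Suc i)" N] by (simp add: add.commute mult.assoc)
  ultimately have "(2 * real N + 1) * apery_B N - real (Suc N) / 2 * apery_B (Suc N)
      + 2 / real (Suc N) * apery_A (Suc N) = ?G 0 - 0"
    using telescope_sums'[OF apery_weighted_telescoper_tendsto_zero[of N]] by (simp add: sums_unique2)
  then show ?thesis
    by (simp add: apery_telescoper_one)
qed

definition Mdiag :: "nat \<Rightarrow> real" where
  "Mdiag N = (\<Prod>m=1..N. real m / (2 * (2 * real m + 1)))"

definition zeta2_partial :: "nat \<Rightarrow> real" where
  "zeta2_partial N = (\<Sum>j<N. 1 / real (Suc j)^2)"

definition Mprod_closed_form :: "nat \<Rightarrow> real^3^3" where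
  "Mprod_closed_form N =
     vector [vector [Mdiag N, -3 * Mdiag N * zeta2_partial N,
                     riemann_zeta 4 - (2 * real N + 1) * Mdiag N * (apery_B N - 4 * zeta2_partial N * apery_A N)],
             vector [0, Mdiag N, riemann_zeta 2 - (2 * real N + 1) * Mdiag N * apery_A N],
             vector [0, 0, 1]]"

lemma Mdiag_Suc: "Mdiag (Suc N) = Mdiag N * (real (Suc N) / (2 * (2 * real (Suc N) + 1)))"
  unfolding Mdiag_def by (simp add: prod.nat_ivl_Suc')

lemma zeta2_partial_Suc: "zeta2_partial (Suc N) = zeta2_partial N + 1 / real (Suc N)^2"
  unfolding zeta2_partial_def by simp

lemma sq_recip_sum_one: "sq_recip_sum N 1 = zeta2_partial (Suc N)"
  unfolding sq_recip_sum_def zeta2_partial_def lessThan_Suc_atMost by (simp add: add.commute)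

lemma closed_form_step_identities:
  fixes m d h a a' b b' z2 z4 :: real
  assumes m: "m > 0"
    and rec_a: "(2 * m - 1) * a - m / 2 * a' = 3 / (2 * m)"
    and rec_b: "(2 * m - 1) * b - m / 2 * b' + 2 / m * a' = 3 / (2 * m) * (h + 1 / m^2)"
  shows "d * (-3 / (2 * m * (2 * m + 1))) + (-3 * d * h) * (m / (2 * (2 * m + 1)))
           = -3 * (d * (m / (2 * (2 * m + 1)))) * (h + 1 / m^2)"
    and "d * (3 / (2 * m)) + (z2 - (2 * m - 1) * d * a)
           = z2 - (2 * m + 1) * (d * (m / (2 * (2 * m + 1)))) * a'"
    and "d * (3 / (2 * m^3)) + (-3 * d * h) * (3 / (2 * m)) + (z4 - (2 * m - 1) * d * (b - 4 * h * a))
           = z4 - (2 * m + 1) * (d * (m / (2 * (2 * m + 1)))) * (b' - 4 * (h + 1 / m^2) * a')"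
  \<comment> \<open>With \<open>u = 1/m\<close> and \<open>v = 1/(2m+1)\<close> the identities become polynomial modulo
      \<open>m u = 1\<close> and \<open>(2m+1) v = 1\<close>, which \<open>algebra\<close> decides.\<close>
proof -
  define u where "u = 1 / m"
  define v where "v = 1 / (2 * m + 1)"
  have inv: "m * u = 1" "(2 * m + 1) * v = 1"
    unfolding u_def v_def using m by auto
  have r: "-3 / (2 * m * (2 * m + 1)) = -3 / 2 * u * v" "m / (2 * (2 * m + 1)) = m / 2 * v"
    "1 / m^2 = u^2" "3 / (2 * m^3) = 3 / 2 * u^3" "3 / (2 * m) = 3 / 2 * u" "2 / m = 2 * u"
    unfolding u_def v_def using m by (simp_all add: field_simps power2_eq_square power3_eq_cube)
  have a: "(2 * m - 1) * a - m / 2 * a' = 3 / 2 * u" using rec_a r by simp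
  have b: "(2 * m - 1) * b - m / 2 * b' + 2 * u * a' = 3 / 2 * u * (h + u^2)" using rec_b r by simp
  show "d * (-3 / (2 * m * (2 * m + 1))) + (-3 * d * h) * (m / (2 * (2 * m + 1)))
           = -3 * (d * (m / (2 * (2 * m + 1)))) * (h + 1 / m^2)"
    unfolding r using inv by algebra
  show "d * (3 / (2 * m)) + (z2 - (2 * m - 1) * d * a)
           = z2 - (2 * m + 1) * (d * (m / (2 * (2 * m + 1)))) * a'"
    unfolding r using inv a by algebra
  show "d * (3 / (2 * m^3)) + (-3 * d * h) * (3 / (2 * m)) + (z4 - (2 * m - 1) * d * (b - 4 * h * a))
           = z4 - (2 * m + 1) * (d * (m / (2 * (2 * m + 1)))) * (b' - 4 * (h + 1 / m^2) * a')"
    unfolding r using inv a b by algebra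
qed

lemma Mprod_closed_form_step: "Mprod_closed_form N ** Mmat (Suc N) = Mprod_closed_form (Suc N)"
proof -
  let ?m = "real (Suc N)"
  have m: "?m > 0" "2 * real N + 1 = 2 * ?m - 1" by auto
  have rec_a: "(2 * ?m - 1) * apery_A N - ?m / 2 * apery_A (Suc N) = 3 / (2 * ?m)"
    using apery_A_recurrence[of N] unfolding m(2) .
  have rec_b: "(2 * ?m - 1) * apery_B N - ?m / 2 * apery_B (Suc N) + 2 / ?m * apery_A (Suc N)
      = 3 / (2 * ?m) * (zeta2_partial N + 1 / ?m^2)"
    using apery_B_recurrence[of N] unfolding m(2) sq_recip_sum_one zeta2_partial_Suc .
  note entries = closed_form_step_identities[OF m(1) rec_a rec_b, of "Mdiag N"]
  show ?thesis
    unfolding vec_eq_iff forall_3 matrix_matrix_mult_def vec_lambda_beta sum_3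
    unfolding Mprod_closed_form_def Mmat_def Let_def vector_3 Mdiag_Suc zeta2_partial_Suc m(2)
    using entries by simp
qed

lemma Mprod_eq_closed_form: "Mprod N = Mprod_closed_form N"
proof (induction N)
  case 0
  show ?case
    by (simp add: vec_eq_iff forall_3 mat_def Mprod_closed_form_def Mdiag_def zeta2_partial_def apery_A_0 apery_B_0)
next
  case (Suc N)
  then show ?case
    by (simp add: Mprod_closed_form_step)
qed

lemma Mdiag_bounds: "0 \<le> Mdiag N" "Mdiag N \<le> (1 / 4)^N"
proof -
  show "0 \<le> Mdiag N"
    unfolding Mdiag_def by (intro prod_nonneg) simp
  have "Mdiag N \<le> (\<Prod>m=1..N. 1 / 4)"
    unfolding Mdiag_def by (intro prod_mono) (simp add: field_simps)
  then show "Mdiag N \<le> (1 / 4)^N"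
    by simp
qed

lemma zeta2_partial_bounds: "0 \<le> zeta2_partial N" "zeta2_partial N \<le> real N"
proof -
  show "0 \<le> zeta2_partial N"
    unfolding zeta2_partial_def by (intro sum_nonneg) simp
  have "zeta2_partial N \<le> (\<Sum>j<N. 1)"
    unfolding zeta2_partial_def by (intro sum_mono) (simp add: field_simps)
  then show "zeta2_partial N \<le> real N"
    by simp
qed

lemma tendsto_zero_if_le_square_quarter_power:
  fixes f :: "nat \<Rightarrow> real"
  assumes "\<And>N. \<bar>f N\<bar> \<le> C * ((real N + 1)^2 * (1 / 4)^N)"
  shows "f \<longlonglongrightarrow> 0"
proof (rule Lim_null_comparison)
  show "\<forall>\<^sub>F N in sequentially. norm (f N) \<le> C * ((real N + 1)^2 * (1 / 4)^N)"
    using assms by simp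
  have "(\<lambda>N. (real N + 1)^2 * (1 / 4 :: real)^N) \<longlonglongrightarrow> 0"
    by real_asymp
  then show "(\<lambda>N. C * ((real N + 1)^2 * (1 / 4)^N)) \<longlonglongrightarrow> 0"
    by (rule tendsto_mult_right_zero)
qed

lemma riemann_zeta_2_nonneg: "0 \<le> riemann_zeta 2"
  using apery_A_nonneg apery_A_le by (rule order_trans)

lemma apery_B_correction_bound:
  "\<bar>apery_B N - 4 * zeta2_partial N * apery_A N\<bar> \<le> 5 * riemann_zeta 2 * (real N + 1)"
proof -
  define P where "P = zeta2_partial N * apery_A N"
  define Q where "Q = real N * riemann_zeta 2"
  have "0 \<le> P" "P \<le> Q"
    unfolding P_def Q_def using zeta2_partial_bounds[of N] apery_A_nonneg[of N] apery_A_le[of N]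
    by (auto intro: mult_mono)
  moreover have "0 \<le> apery_B N" "apery_B N \<le> riemann_zeta 2 + Q"
    unfolding Q_def using apery_B_nonneg[of N] apery_B_le[of N] by (simp_all add: algebra_simps)
  ultimately have "\<bar>apery_B N - 4 * P\<bar> \<le> 5 * (riemann_zeta 2 + Q)"
    using riemann_zeta_2_nonneg by (simp add: abs_le_iff)
  then show ?thesis
    unfolding P_def Q_def by (simp add: algebra_simps)
qed

lemma Mdiag_weighted_bound:
  assumes "\<bar>y\<bar> \<le> C * (real N + 1)"
  shows "\<bar>(2 * real N + 1) * Mdiag N * y\<bar> \<le> 2 * C * ((real N + 1)^2 * (1 / 4)^N)"
proof -
  have "\<bar>(2 * real N + 1) * Mdiag N * y\<bar> \<le> (2 * real N + 1) * (1 / 4)^N * (C * (real N + 1))"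
    unfolding abs_mult using assms Mdiag_bounds[of N] by (intro mult_mono) auto
  also have "\<dots> \<le> (2 * (real N + 1)) * (1 / 4)^N * (C * (real N + 1))"
    using abs_ge_zero[of y] assms by (intro mult_right_mono) auto
  also have "\<dots> = 2 * C * ((real N + 1)^2 * (1 / 4)^N)"
    by (simp add: power2_eq_square)
  finally show ?thesis .
qed

lemma Mdiag_tendsto_zero: "Mdiag \<longlonglongrightarrow> 0"
proof (rule tendsto_zero_if_le_square_quarter_power[of _ 1])
  fix N
  have "\<bar>Mdiag N\<bar> \<le> 1 * (1 / 4)^N"
    using Mdiag_bounds[of N] by simp
  also have "\<dots> \<le> (real N + 1)^2 * (1 / 4)^N"
    by (intro mult_right_mono) (simp_all add: power2_eq_square field_simps)
  finally show "\<bar>Mdiag N\<bar> \<le> 1 * ((real N + 1)^2 * (1 / 4)^N)"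
    by simp
qed

lemma Mdiag_zeta2_partial_tendsto_zero: "(\<lambda>N. -3 * Mdiag N * zeta2_partial N) \<longlonglongrightarrow> 0"
proof (rule tendsto_zero_if_le_square_quarter_power[of _ 3])
  fix N
  have "\<bar>-3 * Mdiag N * zeta2_partial N\<bar> \<le> (3 * (1 / 4)^N) * real N"
    unfolding abs_mult using Mdiag_bounds[of N] zeta2_partial_bounds[of N]
    by (intro mult_mono) auto
  also have "\<dots> \<le> (3 * (1 / 4)^N) * (real N + 1)^2"
    by (intro mult_left_mono) (simp_all add: power2_eq_square field_simps)
  finally show "\<bar>-3 * Mdiag N * zeta2_partial N\<bar> \<le> 3 * ((real N + 1)^2 * (1 / 4)^N)"
    by (simp add: ac_simps)
qed

lemma Mdiag_apery_A_tendsto_zero: "(\<lambda>N. (2 * real N + 1) * Mdiag N * apery_A N) \<longlonglongrightarrow> 0"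
proof (intro tendsto_zero_if_le_square_quarter_power[of _ "2 * riemann_zeta 2"] Mdiag_weighted_bound)
  fix N
  have "riemann_zeta 2 * 1 \<le> riemann_zeta 2 * (real N + 1)"
    using riemann_zeta_2_nonneg by (intro mult_left_mono) auto
  then show "\<bar>apery_A N\<bar> \<le> riemann_zeta 2 * (real N + 1)"
    using apery_A_nonneg[of N] apery_A_le[of N] by simp
qed

lemma Mdiag_apery_B_tendsto_zero:
  "(\<lambda>N. (2 * real N + 1) * Mdiag N * (apery_B N - 4 * zeta2_partial N * apery_A N)) \<longlonglongrightarrow> 0"
  by (intro tendsto_zero_if_le_square_quarter_power[of _ "2 * (5 * riemann_zeta 2)"]
      Mdiag_weighted_bound apery_B_correction_bound)

theorem mainTheorem3:
  shows "Mprod \<longlonglongrightarrow>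
    vector [vector [0, 0, riemann_zeta 4], vector [0, 0, riemann_zeta 2], vector [0, 0, 1]]"
proof -
  note corrections = Mdiag_tendsto_zero Mdiag_zeta2_partial_tendsto_zero
    Mdiag_apery_A_tendsto_zero Mdiag_apery_B_tendsto_zero
  have last_column:
    "(\<lambda>N. riemann_zeta 4 - (2 * real N + 1) * Mdiag N * (apery_B N - 4 * zeta2_partial N * apery_A N))
       \<longlonglongrightarrow> riemann_zeta 4 - 0"
    "(\<lambda>N. riemann_zeta 2 - (2 * real N + 1) * Mdiag N * apery_A N) \<longlonglongrightarrow> riemann_zeta 2 - 0"
    by (intro tendsto_diff tendsto_const corrections)+
  have "Mprod = Mprod_closed_form"
    using Mprod_eq_closed_form by blast
  show ?thesis
    unfolding \<open>Mprod = Mprod_closed_form\<close>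
  proof (intro vec_tendstoI)
    fix i j :: 3
    show "(\<lambda>N. Mprod_closed_form N $ i $ j) \<longlonglongrightarrow>
      vector [vector [0, 0, riemann_zeta 4], vector [0, 0, riemann_zeta 2], vector [0, 0, 1 :: real]] $ i $ j"
      using exhaust_3[of i] exhaust_3[of j] corrections last_column
      by (auto simp: Mprod_closed_form_def)
  qed
qed

end
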